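(* Consider the robust Bayesian persuasion setting described in the context with $n=3$ states and the uniform prior $\mu=(\frac13,\frac13,\frac13)$. Then $\mathrm{Reg}_{\mathrm{AR}}=\frac{1}{2}$.
   Context: Setting: a finite state space $\Omega=[n]=\{1,\dots,n\}$ and a publicly known prior $\mu\in\Delta(\Omega)$ with $\mu_i>0$ for all $i$. A signaling scheme is a stochastic map $\pi$ from $\Omega$ to a (finite or infinite) signal set $S$; Sender commits to $\pi$, the state $\omega\sim\mu$ is drawn, a signal $s\sim\pi(\omega)$ is sent, and Receiver forms the Bayesian posterior $p(s)\in\Delta(\Omega)$. Receiver has actions $\{0,1\}$ (reject/adopt) and utility $u_r:\Omega\times\{0,1\}\to\mathbb{R}$ with $u_r(i,0)=0$ for all $i$; Receiver adopts at posterior $p$ iff $\mathbb{E}_{\omega'\sim p}[u_r(\omega',1)]\ge 0$ (ties broken in favor of adoption). Sender's utility from $\pi$ is $u(\pi,u_r)=\Pr_{s}[\text{Receiver adopts at } p(s)]$. Let $u^*(u_r)=\sup_\pi u(\pi,u_r)$. For a class $\mathcal{U}$ of Receiver utilities, $\mathrm{Reg}(\pi)=\sup_{u_r\in\mathcal{U}}\{u^*(u_r)-u(\pi,u_r)\}$ and $\mathrm{Reg}=\inf_\pi \mathrm{Reg}(\pi)$. $\mathrm{Reg}_{\mathrm{AR}}$ denotes this regret when $\mathcal{U}$ is the class of all Receiver utility functions. *)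

theory Defs
  imports "HOL-Probability.Probability"
begin

text \<open>States are 1..n (type nat). A Receiver utility is represented by the function
  i \<mapsto> u_r(i,1); u_r(i,0) = 0 is built in. The class of all Receiver utilities is
  therefore the set of all functions nat \<Rightarrow> real (only values on 1..n matter).
  A signaling scheme is a stochastic map from states to a signal space; we take the
  signal space to be the reals with the Borel sigma-algebra (which contains every finite
  and countable signal set, and continuum-size ones), so a scheme assigns to each state i
  a Borel probability measure pi i on the reals.\<close>

type_synonym scheme = "nat \<Rightarrow> real measure"

definition is_scheme :: "nat \<Rightarrow> scheme \<Rightarrow> bool" where
  "is_scheme n \<pi> \<longleftrightarrow>
     (\<forall>i\<in>{1..n}. prob_space (\<pi> i) \<and> sets (\<pi> i) = sets (borel :: real measure))"

definition signal_dist :: "nat \<Rightarrow> (nat \<Rightarrow> real) \<Rightarrow> scheme \<Rightarrow> real measure" where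
  "signal_dist n \<mu> \<pi> =
     measure_of UNIV (sets (borel :: real measure))
       (\<lambda>A. \<Sum>i\<in>{1..n}. ennreal (\<mu> i) * emeasure (\<pi> i) A)"

definition posterior :: "nat \<Rightarrow> (nat \<Rightarrow> real) \<Rightarrow> scheme \<Rightarrow> real \<Rightarrow> nat \<Rightarrow> real" where
  "posterior n \<mu> \<pi> s i =
     (let \<nu> = signal_dist n \<mu> \<pi> in
      if i \<in> {1..n} then
        \<mu> i * enn2real (RN_deriv \<nu> (\<pi> i) s) /
          (\<Sum>j\<in>{1..n}. \<mu> j * enn2real (RN_deriv \<nu> (\<pi> j) s))
      else 0)"

definition adopts :: "nat \<Rightarrow> (nat \<Rightarrow> real) \<Rightarrow> (nat \<Rightarrow> real) \<Rightarrow> bool" where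
  "adopts n u p \<longleftrightarrow> (\<Sum>i\<in>{1..n}. p i * u i) \<ge> 0"

definition sender_util :: "nat \<Rightarrow> (nat \<Rightarrow> real) \<Rightarrow> scheme \<Rightarrow> (nat \<Rightarrow> real) \<Rightarrow> real" where
  "sender_util n \<mu> \<pi> u =
     measure (signal_dist n \<mu> \<pi>) {s. adopts n u (posterior n \<mu> \<pi> s)}"

definition opt_util :: "nat \<Rightarrow> (nat \<Rightarrow> real) \<Rightarrow> (nat \<Rightarrow> real) \<Rightarrow> real" where
  "opt_util n \<mu> u = (SUP \<pi>\<in>{\<pi>. is_scheme n \<pi>}. sender_util n \<mu> \<pi> u)"

definition regret_AR :: "nat \<Rightarrow> (nat \<Rightarrow> real) \<Rightarrow> scheme \<Rightarrow> real" where
  "regret_AR n \<mu> \<pi> = (SUP u\<in>(UNIV :: (nat \<Rightarrow> real) set). opt_util n \<mu> u - sender_util n \<mu> \<pi> u)"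

definition Reg_AR :: "nat \<Rightarrow> (nat \<Rightarrow> real) \<Rightarrow> real" where
  "Reg_AR n \<mu> = (INF \<pi>\<in>{\<pi>. is_scheme n \<pi>}. regret_AR n \<mu> \<pi>)"

end

theory Submission
  imports Defs
begin

text \<open>
  For \<open>\<epsilon> > 0\<close> the Receiver with utility \<open>e\<^sub>1 - e\<^sub>2 - \<epsilon>\<close> adopts iff
  \<open>p\<^sub>1 - p\<^sub>2 \<ge> \<epsilon>\<close>, and the one with \<open>e\<^sub>2 - e\<^sub>1 - \<epsilon>\<close> iff \<open>p\<^sub>2 - p\<^sub>1 \<ge> \<epsilon>\<close>; no posterior
  satisfies both, so every scheme persuades the two with total probability at most 1, while
  each alone can be persuaded with probability \<open>1 - \<epsilon>\<close> by splitting the prior into two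
  posteriors. Hence every scheme has regret at least \<open>1/2 - \<epsilon>\<close>.

  Let the signal be uniform on \<open>[0,6)\<close> and let its \<open>k\<close>-th unit interval trace,
  for the \<open>k\<close>-th ordered pair \<open>(a,b)\<close> of distinct states, the posteriors
  \<open>(\<delta>\<^sub>a + t \<delta>\<^sub>b)/(1 + t)\<close>, \<open>0 \<le> t < 1\<close>; these average to the uniform prior. The Receiver
  adopts there iff \<open>u\<^sub>a + t u\<^sub>b \<ge> 0\<close>, so the scheme persuades with probability at least
  \<open>T(u)/6\<close>, an explicit sum over the pairs. Conversely, since posteriors average to the prior,
  a vector \<open>c \<ge> 0\<close> with \<open>p \<cdot> c \<ge> 1\<close> at every adopting posterior bounds every scheme by
  \<open>\<Sum>\<^sub>i \<mu>\<^sub>i c\<^sub>i\<close>; a case analysis on the signs and order of \<open>u\<close> produces such a \<open>c\<close>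
  with \<open>\<Sum>\<^sub>i c\<^sub>i/3 \<le> T(u)/6 + 1/2\<close>.
\<close>

section \<open>Signal distribution and posteriors\<close>

lemma sets_signal_dist [simp, measurable_cong]: "sets (signal_dist n \<mu> \<pi>) = sets borel"
  unfolding signal_dist_def
  using sets.sigma_sets_eq[of "borel :: real measure"] by (simp add: sets_measure_of_conv)

lemma space_signal_dist [simp]: "space (signal_dist n \<mu> \<pi>) = UNIV"
  using sets_eq_imp_space_eq[OF sets_signal_dist] by simp

lemma emeasure_signal_dist:
  assumes "is_scheme n \<pi>" and "A \<in> sets borel"
  shows "emeasure (signal_dist n \<mu> \<pi>) A = (\<Sum>i\<in>{1..n}. ennreal (\<mu> i) * emeasure (\<pi> i) A)"
  unfolding signal_dist_def
proof (rule emeasure_measure_of_sigma)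
  show "sigma_algebra UNIV (sets (borel :: real measure))"
    using sets.sigma_algebra_axioms[of "borel :: real measure"] by simp
  show "countably_additive (sets borel) (\<lambda>A. \<Sum>i\<in>{1..n}. ennreal (\<mu> i) * emeasure (\<pi> i) A)"
    unfolding countably_additive_def
  proof (intro allI impI)
    fix F :: "nat \<Rightarrow> real set"
    assume F: "range F \<subseteq> sets borel" "disjoint_family F"
    have "(\<Sum>k. \<Sum>i\<in>{1..n}. ennreal (\<mu> i) * emeasure (\<pi> i) (F k))
        = (\<Sum>i\<in>{1..n}. \<Sum>k. ennreal (\<mu> i) * emeasure (\<pi> i) (F k))"
      by (rule suminf_sum) (rule summableI)
    also have "\<dots> = (\<Sum>i\<in>{1..n}. ennreal (\<mu> i) * emeasure (\<pi> i) (\<Union> (range F)))"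
    proof (rule sum.cong[OF refl])
      fix i assume "i \<in> {1..n}"
      then have "sets (\<pi> i) = sets borel" using assms(1) unfolding is_scheme_def by auto
      then show "(\<Sum>k. ennreal (\<mu> i) * emeasure (\<pi> i) (F k)) = ennreal (\<mu> i) * emeasure (\<pi> i) (\<Union> (range F))"
        using suminf_emeasure[of F "\<pi> i"] F by (simp add: ennreal_suminf_cmult)
    qed
    finally show "(\<Sum>k. \<Sum>i\<in>{1..n}. ennreal (\<mu> i) * emeasure (\<pi> i) (F k))
        = (\<Sum>i\<in>{1..n}. ennreal (\<mu> i) * emeasure (\<pi> i) (\<Union> (range F)))" .
  qed
qed (use assms(2) in \<open>simp_all add: positive_def\<close>)

lemma is_scheme_return: "is_scheme n (\<lambda>_. return borel x)"
  unfolding is_scheme_def by (simp add: prob_space_return)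

definition prob_simplex :: "nat \<Rightarrow> (nat \<Rightarrow> real) set" where
  "prob_simplex n = {p. (\<forall>i\<in>{1..n}. 0 \<le> p i) \<and> (\<Sum>i\<in>{1..n}. p i) = 1}"

definition certifies :: "nat \<Rightarrow> (nat \<Rightarrow> real) \<Rightarrow> (nat \<Rightarrow> real) \<Rightarrow> bool" where
  "certifies n u c \<longleftrightarrow>
     (\<forall>i\<in>{1..n}. 0 \<le> c i) \<and> (\<forall>p\<in>prob_simplex n. adopts n u p \<longrightarrow> 1 \<le> (\<Sum>i\<in>{1..n}. p i * c i))"

locale prior =
  fixes n :: nat and \<mu> :: "nat \<Rightarrow> real"
  assumes prior_pos: "\<And>i. i \<in> {1..n} \<Longrightarrow> 0 < \<mu> i"
    and prior_sum: "(\<Sum>i\<in>{1..n}. \<mu> i) = 1"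

locale signaling = prior +
  fixes \<pi> :: scheme
  assumes scheme: "is_scheme n \<pi>"
begin

abbreviation \<nu> :: "real measure" where "\<nu> \<equiv> signal_dist n \<mu> \<pi>"

lemma sets_scheme [measurable_cong]: "i \<in> {1..n} \<Longrightarrow> sets (\<pi> i) = sets borel"
  using scheme unfolding is_scheme_def by auto

lemma prob_space_scheme: "i \<in> {1..n} \<Longrightarrow> prob_space (\<pi> i)"
  using scheme unfolding is_scheme_def by auto

lemma emeasure_scheme_UNIV: "i \<in> {1..n} \<Longrightarrow> emeasure (\<pi> i) UNIV = 1"
  using prob_space.emeasure_space_1[OF prob_space_scheme] sets_eq_imp_space_eq[OF sets_scheme]
  by (metis space_borel)

sublocale signal: prob_space \<nu>
proof
  have "emeasure \<nu> UNIV = (\<Sum>i\<in>{1..n}. ennreal (\<mu> i))"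
    by (simp add: emeasure_signal_dist[OF scheme] emeasure_scheme_UNIV)
  also have "\<dots> = 1"
    using prior_pos prior_sum by (subst sum_ennreal) (auto intro: less_imp_le)
  finally show "emeasure \<nu> (space \<nu>) = 1" by simp
qed

lemma absolutely_continuous_signal_dist:
  assumes i: "i \<in> {1..n}"
  shows "absolutely_continuous \<nu> (\<pi> i)"
  unfolding absolutely_continuous_def
proof
  fix A assume "A \<in> null_sets \<nu>"
  then have A: "A \<in> sets borel" and "emeasure \<nu> A = 0" by auto
  then have "(\<Sum>j\<in>{1..n}. ennreal (\<mu> j) * emeasure (\<pi> j) A) = 0"
    by (simp add: emeasure_signal_dist[OF scheme])
  then have "ennreal (\<mu> i) * emeasure (\<pi> i) A = 0"
    using i by (subst (asm) sum_eq_0_iff) auto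
  then show "A \<in> null_sets (\<pi> i)"
    using A prior_pos[OF i] sets_scheme[OF i] by auto
qed

lemma density_RN_deriv_signal_dist:
  "i \<in> {1..n} \<Longrightarrow> density \<nu> (RN_deriv \<nu> (\<pi> i)) = \<pi> i"
  using signal.density_RN_deriv[OF absolutely_continuous_signal_dist] sets_scheme by simp

lemma AE_RN_deriv_finite: "i \<in> {1..n} \<Longrightarrow> AE s in \<nu>. RN_deriv \<nu> (\<pi> i) s \<noteq> \<infinity>"
  using signal.RN_deriv_finite[OF prob_space_imp_sigma_finite[OF prob_space_scheme]
      absolutely_continuous_signal_dist] sets_scheme by simp

lemma AE_sum_RN_deriv: "AE s in \<nu>. (\<Sum>i\<in>{1..n}. ennreal (\<mu> i) * RN_deriv \<nu> (\<pi> i) s) = 1"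
proof -
  let ?f = "\<lambda>s. \<Sum>i\<in>{1..n}. ennreal (\<mu> i) * RN_deriv \<nu> (\<pi> i) s"
  have "density \<nu> ?f = density \<nu> (\<lambda>_. 1)"
  proof (rule measure_eqI)
    fix A assume "A \<in> sets (density \<nu> ?f)"
    then have A [measurable]: "A \<in> sets borel" by simp
    have "emeasure (density \<nu> ?f) A = (\<integral>\<^sup>+s. ?f s * indicator A s \<partial>\<nu>)"
      by (simp add: emeasure_density)
    also have "\<dots> = (\<Sum>i\<in>{1..n}. ennreal (\<mu> i) * (\<integral>\<^sup>+s. RN_deriv \<nu> (\<pi> i) s * indicator A s \<partial>\<nu>))"
      by (simp add: sum_distrib_right mult.assoc nn_integral_sum nn_integral_cmult)
    also have "\<dots> = (\<Sum>i\<in>{1..n}. ennreal (\<mu> i) * emeasure (\<pi> i) A)"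
    proof (intro sum.cong refl arg_cong2[where f = "(*)"])
      fix i assume "i \<in> {1..n}"
      then show "(\<integral>\<^sup>+s. RN_deriv \<nu> (\<pi> i) s * indicator A s \<partial>\<nu>) = emeasure (\<pi> i) A"
        using emeasure_density[of "RN_deriv \<nu> (\<pi> i)" \<nu> A] density_RN_deriv_signal_dist by simp
    qed
    also have "\<dots> = emeasure (density \<nu> (\<lambda>_. 1)) A"
      by (simp add: density_1 emeasure_signal_dist[OF scheme])
    finally show "emeasure (density \<nu> ?f) A = emeasure (density \<nu> (\<lambda>_. 1)) A" .
  qed simp
  then show ?thesis
    by (subst (asm) signal.density_unique_iff) auto
qed

lemma AE_posterior:
  "AE s in \<nu>. posterior n \<mu> \<pi> s \<in> prob_simplex n \<and>
     (\<forall>i\<in>{1..n}. posterior n \<mu> \<pi> s i = \<mu> i * enn2real (RN_deriv \<nu> (\<pi> i) s))"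
proof -
  have "AE s in \<nu>. \<forall>i\<in>{1..n}. RN_deriv \<nu> (\<pi> i) s \<noteq> \<infinity>"
    using AE_RN_deriv_finite by (subst AE_finite_all) auto
  with AE_sum_RN_deriv show ?thesis
  proof eventually_elim
    case (elim s)
    let ?q = "\<lambda>i. \<mu> i * enn2real (RN_deriv \<nu> (\<pi> i) s)"
    have q_nonneg: "0 \<le> ?q i" if "i \<in> {1..n}" for i
      using prior_pos[OF that] by simp
    have "ennreal (\<Sum>i\<in>{1..n}. ?q i) = (\<Sum>i\<in>{1..n}. ennreal (\<mu> i) * RN_deriv \<nu> (\<pi> i) s)"
      using elim(2) prior_pos q_nonneg
      by (subst sum_ennreal[symmetric]) (auto intro!: sum.cong simp: ennreal_mult less_imp_le less_top)
    then have sum_q: "(\<Sum>i\<in>{1..n}. ?q i) = 1"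
      using elim(1) by simp
    then have "posterior n \<mu> \<pi> s i = ?q i" if "i \<in> {1..n}" for i
      using that by (auto simp: posterior_def)
    moreover have "posterior n \<mu> \<pi> s i = 0" if "i \<notin> {1..n}" for i
      using that by (auto simp: posterior_def)
    ultimately show ?case
      using sum_q q_nonneg by (simp add: prob_simplex_def)
  qed
qed

lemma nn_integral_posterior:
  assumes i: "i \<in> {1..n}"
  shows "(\<integral>\<^sup>+s. ennreal (posterior n \<mu> \<pi> s i) \<partial>\<nu>) = ennreal (\<mu> i)"
proof -
  have "(\<integral>\<^sup>+s. ennreal (posterior n \<mu> \<pi> s i) \<partial>\<nu>) = (\<integral>\<^sup>+s. ennreal (\<mu> i) * RN_deriv \<nu> (\<pi> i) s \<partial>\<nu>)"
    using AE_posterior AE_RN_deriv_finite[OF i]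
    by (intro nn_integral_cong_AE, eventually_elim)
       (use i prior_pos[OF i] in \<open>simp add: ennreal_mult less_imp_le less_top\<close>)
  also have "\<dots> = ennreal (\<mu> i) * emeasure (\<pi> i) UNIV"
    using emeasure_density[of "RN_deriv \<nu> (\<pi> i)" \<nu> UNIV] density_RN_deriv_signal_dist[OF i]
    by (simp add: nn_integral_cmult)
  finally show ?thesis
    using emeasure_scheme_UNIV[OF i] by simp
qed

lemma measurable_posterior [measurable]: "(\<lambda>s. posterior n \<mu> \<pi> s i) \<in> borel_measurable borel"
  unfolding posterior_def Let_def by (cases "i \<in> {1..n}") simp_all

lemma sets_adopts [measurable]: "{s. adopts n u (posterior n \<mu> \<pi> s)} \<in> sets borel"
  unfolding adopts_def by measurable

lemma sender_util_le_certificate: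
  assumes c: "certifies n u c"
  shows "sender_util n \<mu> \<pi> u \<le> (\<Sum>i\<in>{1..n}. \<mu> i * c i)"
proof -
  let ?A = "{s. adopts n u (posterior n \<mu> \<pi> s)}"
  have c_nonneg: "0 \<le> c i" if "i \<in> {1..n}" for i
    using c that unfolding certifies_def by auto
  have "emeasure \<nu> ?A = (\<integral>\<^sup>+s. indicator ?A s \<partial>\<nu>)"
    by (simp add: nn_integral_indicator sets_adopts)
  also have "\<dots> \<le> (\<integral>\<^sup>+s. (\<Sum>i\<in>{1..n}. ennreal (c i) * ennreal (posterior n \<mu> \<pi> s i)) \<partial>\<nu>)"
  proof (rule nn_integral_mono_AE)
    show "AE s in \<nu>. indicator ?A s \<le> (\<Sum>i\<in>{1..n}. ennreal (c i) * ennreal (posterior n \<mu> \<pi> s i))"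
      using AE_posterior
    proof eventually_elim
      case (elim s)
      then have "(\<Sum>i\<in>{1..n}. ennreal (c i) * ennreal (posterior n \<mu> \<pi> s i))
          = ennreal (\<Sum>i\<in>{1..n}. posterior n \<mu> \<pi> s i * c i)"
        using c_nonneg by (subst sum_ennreal[symmetric])
          (auto intro!: sum.cong simp: prob_simplex_def ennreal_mult mult.commute)
      moreover have "s \<in> ?A \<Longrightarrow> 1 \<le> (\<Sum>i\<in>{1..n}. posterior n \<mu> \<pi> s i * c i)"
        using c elim unfolding certifies_def by auto
      ultimately show ?case
        by (auto split: split_indicator)
    qed
  qed
  also have "\<dots> = (\<Sum>i\<in>{1..n}. ennreal (c i) * ennreal (\<mu> i))"
    by (simp add: nn_integral_sum nn_integral_cmult nn_integral_posterior)
  also have "\<dots> = ennreal (\<Sum>i\<in>{1..n}. \<mu> i * c i)"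
    using c_nonneg prior_pos by (subst sum_ennreal[symmetric])
      (auto intro!: sum.cong simp: ennreal_mult less_imp_le mult.commute)
  finally have "ennreal (signal.prob ?A) \<le> ennreal (\<Sum>i\<in>{1..n}. \<mu> i * c i)"
    by (simp add: signal.emeasure_eq_measure)
  moreover have "0 \<le> (\<Sum>i\<in>{1..n}. \<mu> i * c i)"
    using c_nonneg prior_pos by (meson sum_nonneg mult_nonneg_nonneg less_imp_le)
  ultimately show ?thesis
    unfolding sender_util_def by simp
qed

lemma sender_util_le_one: "sender_util n \<mu> \<pi> u \<le> 1"
  unfolding sender_util_def by (rule signal.prob_le_1)

lemma sender_util_add_le_one:
  assumes disjoint: "\<And>p. p \<in> prob_simplex n \<Longrightarrow> adopts n u p \<Longrightarrow> adopts n v p \<Longrightarrow> False"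
  shows "sender_util n \<mu> \<pi> u + sender_util n \<mu> \<pi> v \<le> 1"
proof -
  let ?A = "{s. adopts n u (posterior n \<mu> \<pi> s)}" and ?B = "{s. adopts n v (posterior n \<mu> \<pi> s)}"
  have "AE s in \<nu>. s \<notin> ?A \<inter> ?B"
    using AE_posterior by eventually_elim (use disjoint in blast)
  then have "signal.prob (?A \<inter> ?B) = 0"
    using emeasure_eq_0_AE[of "\<lambda>s. s \<in> ?A \<inter> ?B" \<nu>] by (simp add: measure_def Collect_conj_eq)
  then have "signal.prob ?A + signal.prob ?B = signal.prob (?A \<union> ?B)"
    using measure_Un3[of ?A \<nu> ?B] by (simp add: signal.fmeasurable_eq_sets)
  then show ?thesis
    unfolding sender_util_def using signal.prob_le_1 by simp
qed

end

context prior
begin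

lemma signalingI: "is_scheme n \<pi> \<Longrightarrow> signaling n \<mu> \<pi>"
  by (intro signaling.intro prior_axioms signaling_axioms.intro)

lemma sender_util_nonneg: "0 \<le> sender_util n \<mu> \<pi> u"
  unfolding sender_util_def by (rule measure_nonneg)

lemma sender_util_le_opt_util:
  assumes "is_scheme n \<pi>"
  shows "sender_util n \<mu> \<pi> u \<le> opt_util n \<mu> u"
  unfolding opt_util_def
proof (rule cSUP_upper)
  show "bdd_above ((\<lambda>\<pi>. sender_util n \<mu> \<pi> u) ` {\<pi>. is_scheme n \<pi>})"
    by (rule bdd_aboveI[of _ 1]) (auto dest: signalingI intro: signaling.sender_util_le_one)
qed (use assms in simp)

lemma opt_util_le:
  assumes "\<And>\<pi>. is_scheme n \<pi> \<Longrightarrow> sender_util n \<mu> \<pi> u \<le> B"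
  shows "opt_util n \<mu> u \<le> B"
  unfolding opt_util_def using is_scheme_return by (intro cSUP_least) (auto intro: assms)

lemma opt_util_le_one: "opt_util n \<mu> u \<le> 1"
  by (rule opt_util_le) (auto dest: signalingI intro: signaling.sender_util_le_one)

lemma opt_util_le_certificate: "certifies n u c \<Longrightarrow> opt_util n \<mu> u \<le> (\<Sum>i\<in>{1..n}. \<mu> i * c i)"
  by (metis opt_util_le signalingI signaling.sender_util_le_certificate)

lemma regret_AR_ge: "opt_util n \<mu> u - sender_util n \<mu> \<pi> u \<le> regret_AR n \<mu> \<pi>"
  unfolding regret_AR_def
proof (rule cSUP_upper)
  show "bdd_above (range (\<lambda>u. opt_util n \<mu> u - sender_util n \<mu> \<pi> u))"
  proof (rule bdd_aboveI2)
    fix u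
    show "opt_util n \<mu> u - sender_util n \<mu> \<pi> u \<le> 1"
      using opt_util_le_one[of u] sender_util_nonneg[of \<pi> u] by linarith
  qed
qed simp

lemma regret_AR_le:
  "(\<And>u. opt_util n \<mu> u - sender_util n \<mu> \<pi> u \<le> B) \<Longrightarrow> regret_AR n \<mu> \<pi> \<le> B"
  unfolding regret_AR_def by (rule cSUP_least) auto

lemma Reg_AR_eqI:
  assumes lower: "\<And>\<pi>. is_scheme n \<pi> \<Longrightarrow> B \<le> regret_AR n \<mu> \<pi>"
    and "is_scheme n \<pi>\<^sub>0" and "regret_AR n \<mu> \<pi>\<^sub>0 \<le> B"
  shows "Reg_AR n \<mu> = B"
  unfolding Reg_AR_def
proof (rule antisym)
  have "bdd_below (regret_AR n \<mu> ` {\<pi>. is_scheme n \<pi>})"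
    using lower by (intro bdd_belowI[of _ B]) auto
  then show "(INF \<pi>\<in>{\<pi>. is_scheme n \<pi>}. regret_AR n \<mu> \<pi>) \<le> B"
    using assms(2,3) by (intro cINF_lower2[where x = \<pi>\<^sub>0]) auto
  show "B \<le> (INF \<pi>\<in>{\<pi>. is_scheme n \<pi>}. regret_AR n \<mu> \<pi>)"
    using assms(2) by (intro cINF_greatest lower) auto
qed

end

section \<open>Schemes inducing a given posterior map\<close>

definition posterior_scheme :: "(nat \<Rightarrow> real) \<Rightarrow> real measure \<Rightarrow> (nat \<Rightarrow> real \<Rightarrow> real) \<Rightarrow> scheme" where
  "posterior_scheme \<mu> P q i = density P (\<lambda>s. ennreal (q i s / \<mu> i))"

locale posterior_map = prior +
  fixes P :: "real measure" and q :: "nat \<Rightarrow> real \<Rightarrow> real"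
  assumes sets_P [measurable_cong]: "sets P = sets borel"
    and measurable_q [measurable]: "\<And>i. q i \<in> borel_measurable borel"
    and AE_q_prob_simplex: "AE s in P. (\<lambda>i. q i s) \<in> prob_simplex n"
    and nn_integral_q: "\<And>i. i \<in> {1..n} \<Longrightarrow> (\<integral>\<^sup>+s. ennreal (q i s) \<partial>P) = ennreal (\<mu> i)"
begin

lemma prior_times_density: "i \<in> {1..n} \<Longrightarrow> ennreal (\<mu> i) * ennreal (q i s / \<mu> i) = ennreal (q i s)"
  using prior_pos[of i] by (simp flip: ennreal_mult')

lemma emeasure_posterior_scheme:
  assumes "i \<in> {1..n}" and [measurable]: "A \<in> sets borel"
  shows "ennreal (\<mu> i) * emeasure (posterior_scheme \<mu> P q i) A = (\<integral>\<^sup>+s. ennreal (q i s) * indicator A s \<partial>P)"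
  unfolding posterior_scheme_def using assms(1)
  by (simp add: emeasure_density nn_integral_cmult[symmetric] mult.assoc[symmetric] prior_times_density)

lemma is_scheme_posterior_scheme: "is_scheme n (posterior_scheme \<mu> P q)"
  unfolding is_scheme_def
proof (intro ballI conjI)
  fix i assume i: "i \<in> {1..n}"
  show "sets (posterior_scheme \<mu> P q i) = sets borel"
    by (simp add: posterior_scheme_def sets_P)
  have "ennreal (\<mu> i) * emeasure (posterior_scheme \<mu> P q i) UNIV = ennreal (\<mu> i)"
    using emeasure_posterior_scheme[OF i, of UNIV] nn_integral_q[OF i] by simp
  then have "emeasure (posterior_scheme \<mu> P q i) UNIV = 1"
    using prior_pos[OF i] by (metis ennreal_mult_cancel_left ennreal_eq_0_iff ennreal_neq_top
        less_imp_le mult.right_neutral not_less)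
  then show "prob_space (posterior_scheme \<mu> P q i)"
    using sets_eq_imp_space_eq[OF sets_P] by (intro prob_spaceI) (simp add: posterior_scheme_def)
qed

lemma signal_dist_posterior_scheme: "signal_dist n \<mu> (posterior_scheme \<mu> P q) = P"
proof (rule measure_eqI)
  fix A assume "A \<in> sets (signal_dist n \<mu> (posterior_scheme \<mu> P q))"
  then have A [measurable]: "A \<in> sets borel" by simp
  have "emeasure (signal_dist n \<mu> (posterior_scheme \<mu> P q)) A
      = (\<Sum>i\<in>{1..n}. \<integral>\<^sup>+s. ennreal (q i s) * indicator A s \<partial>P)"
    by (simp add: emeasure_signal_dist[OF is_scheme_posterior_scheme] emeasure_posterior_scheme)
  also have "\<dots> = (\<integral>\<^sup>+s. (\<Sum>i\<in>{1..n}. ennreal (q i s)) * indicator A s \<partial>P)"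
    unfolding sum_distrib_right by (rule nn_integral_sum[symmetric]) simp
  also have "\<dots> = (\<integral>\<^sup>+s. indicator A s \<partial>P)"
  proof (intro nn_integral_cong_AE)
    show "AE s in P. (\<Sum>i\<in>{1..n}. ennreal (q i s)) * indicator A s = indicator A s"
      using AE_q_prob_simplex
    proof eventually_elim
      case (elim s)
      then have "(\<Sum>i\<in>{1..n}. ennreal (q i s)) = 1"
        by (subst sum_ennreal) (auto simp: prob_simplex_def)
      then show ?case by simp
    qed
  qed
  also have "\<dots> = emeasure P A"
    by (simp add: sets_P)
  finally show "emeasure (signal_dist n \<mu> (posterior_scheme \<mu> P q)) A = emeasure P A" .
qed (simp add: sets_P)

sublocale signaling n \<mu> "posterior_scheme \<mu> P q"
  by (rule signalingI[OF is_scheme_posterior_scheme])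

lemma AE_posterior_eq: "AE s in P. \<forall>i\<in>{1..n}. posterior n \<mu> (posterior_scheme \<mu> P q) s i = q i s"
proof -
  have "AE s in P. ennreal (q i s / \<mu> i) = RN_deriv P (posterior_scheme \<mu> P q i) s" for i
    using signal.RN_deriv_unique[of "\<lambda>s. ennreal (q i s / \<mu> i)" "posterior_scheme \<mu> P q i"]
    unfolding signal_dist_posterior_scheme by (simp add: posterior_scheme_def)
  then have "AE s in P. \<forall>i\<in>{1..n}. ennreal (q i s / \<mu> i) = RN_deriv P (posterior_scheme \<mu> P q i) s"
    by (subst AE_finite_all) auto
  with AE_posterior AE_q_prob_simplex show ?thesis
    unfolding signal_dist_posterior_scheme
  proof eventually_elim
    case (elim s)
    show ?case
    proof
      fix i assume i: "i \<in> {1..n}"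
      then have "0 \<le> q i s / \<mu> i"
        using elim(2) prior_pos[OF i] by (simp add: prob_simplex_def)
      then have "enn2real (RN_deriv P (posterior_scheme \<mu> P q i) s) = q i s / \<mu> i"
        using elim(3) i enn2real_ennreal[OF \<open>0 \<le> q i s / \<mu> i\<close>] by simp
      then show "posterior n \<mu> (posterior_scheme \<mu> P q) s i = q i s"
        using elim(1) i prior_pos[OF i] by simp
    qed
  qed
qed

lemma sender_util_posterior_scheme:
  "sender_util n \<mu> (posterior_scheme \<mu> P q) u = measure P {s. adopts n u (\<lambda>i. q i s)}"
  unfolding sender_util_def signal_dist_posterior_scheme
proof (rule measure_eq_AE)
  show "AE s in P. s \<in> {s. adopts n u (posterior n \<mu> (posterior_scheme \<mu> P q) s)}
      \<longleftrightarrow> s \<in> {s. adopts n u (\<lambda>i. q i s)}"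
    using AE_posterior_eq by eventually_elim (simp add: adopts_def)
qed (simp_all add: sets_P adopts_def)

lemma measure_adopts_le_opt_util: "measure P {s. adopts n u (\<lambda>i. q i s)} \<le> opt_util n \<mu> u"
  using sender_util_le_opt_util[OF is_scheme_posterior_scheme] by (simp add: sender_util_posterior_scheme)

end

section \<open>Lower bound\<close>

lemma measure_uniform_Ico:
  assumes "a < b" and "A \<in> sets borel"
  shows "measure (uniform_measure lborel {a..<b::real}) A = measure lborel ({a..<b} \<inter> A) / (b - a)"
  using assms by (subst measure_uniform_measure) auto

lemma (in prior) opt_util_ge_two_posteriors:
  assumes a: "a \<in> prob_simplex n" and b: "b \<in> prob_simplex n" and e: "0 \<le> e" "e \<le> 1"
    and mean: "\<And>i. i \<in> {1..n} \<Longrightarrow> e * a i + (1 - e) * b i = \<mu> i"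
    and adopt: "adopts n u a"
  shows "e \<le> opt_util n \<mu> u"
proof -
  define q where "q i s = (if s < e then a i else b i)" for i s
  interpret posterior_map n \<mu> "uniform_measure lborel {0..<1}" q
  proof (intro posterior_map.intro prior_axioms posterior_map_axioms.intro)
    have "(\<lambda>i. q i s) = (if s < e then a else b)" for s
      by (simp add: q_def fun_eq_iff)
    then show "AE s in uniform_measure lborel {0..<1}. (\<lambda>i. q i s) \<in> prob_simplex n"
      using a b by (intro AE_I2) simp
    show "q i \<in> borel_measurable borel" for i
      unfolding q_def by measurable
    fix i assume i: "i \<in> {1..n}"
    have "(\<integral>\<^sup>+s. ennreal (q i s) \<partial>uniform_measure lborel {0..<1})
        = (\<integral>\<^sup>+s. ennreal (a i) * indicator {0..<e} s + ennreal (b i) * indicator {e..<1} s \<partial>lborel)"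
      unfolding q_def using e
      by (subst nn_integral_uniform_measure)
        (auto simp: divide_ennreal_def intro!: nn_integral_cong split: split_indicator)
    also have "\<dots> = ennreal (e * a i + (1 - e) * b i)"
      using a b e i
      by (simp add: nn_integral_add nn_integral_cmult prob_simplex_def ennreal_mult' ennreal_plus mult.commute)
    finally show "(\<integral>\<^sup>+s. ennreal (q i s) \<partial>uniform_measure lborel {0..<1}) = ennreal (\<mu> i)"
      using mean[OF i] by simp
  qed simp
  have "{0..<e} \<subseteq> {s. adopts n u (\<lambda>i. q i s)}"
    using adopt by (auto simp: q_def)
  then have "measure lborel ({0..<1} \<inter> {0..<e}) \<le> measure lborel ({0..<1} \<inter> {s. adopts n u (\<lambda>i. q i s)})"
    by (intro measure_mono_fmeasurable fmeasurable_Int_fmeasurable) (auto simp: adopts_def fmeasurable_def)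
  then have "e \<le> measure (uniform_measure lborel {0..<1}) {s. adopts n u (\<lambda>i. q i s)}"
    using e by (simp add: measure_uniform_Ico adopts_def min_def)
  also have "\<dots> \<le> opt_util n \<mu> u"
    by (rule measure_adopts_le_opt_util)
  finally show ?thesis .
qed

definition tilted_utility :: "real \<Rightarrow> nat \<Rightarrow> nat \<Rightarrow> nat \<Rightarrow> real" where
  "tilted_utility \<epsilon> j k i = (if i = j then 1 else if i = k then -1 else 0) - \<epsilon>"

lemma adopts_tilted_utility_iff:
  assumes "j \<in> {1..n}" "k \<in> {1..n}" "j \<noteq> k" and p: "p \<in> prob_simplex n"
  shows "adopts n (tilted_utility \<epsilon> j k) p \<longleftrightarrow> \<epsilon> \<le> p j - p k"
proof -
  have "(\<Sum>i\<in>{1..n}. p i * tilted_utility \<epsilon> j k i)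
      = (\<Sum>i\<in>{1..n}. if i = j then p i else 0) - (\<Sum>i\<in>{1..n}. if i = k then p i else 0) - \<epsilon> * (\<Sum>i\<in>{1..n}. p i)"
  proof -
    have "p i * tilted_utility \<epsilon> j k i = (if i = j then p i else 0) - (if i = k then p i else 0) - \<epsilon> * p i" for i
      using assms(3) by (simp add: tilted_utility_def algebra_simps)
    then show ?thesis
      by (simp add: sum_subtractf sum_distrib_left)
  qed
  also have "\<dots> = p j - p k - \<epsilon>"
    using assms by (simp add: prob_simplex_def)
  finally show ?thesis
    unfolding adopts_def by linarith
qed

interpretation uniform3: prior 3 "\<lambda>_. 1/3"
  by standard simp_all

lemma opt_util_tilted_utility_ge:
  assumes \<epsilon>: "0 < \<epsilon>" "\<epsilon> \<le> 1/3" and jk: "j \<in> {1..3}" "k \<in> {1..3}" "j \<noteq> k"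
  shows "1 - \<epsilon> \<le> opt_util 3 (\<lambda>_. 1/3) (tilted_utility \<epsilon> j k)"
proof (rule uniform3.opt_util_ge_two_posteriors)
  \<comment> \<open>With probability \<open>\<epsilon>\<close> reveal state \<open>k\<close>; the other posterior has \<open>p\<^sub>j - p\<^sub>k = \<epsilon>/(1 - \<epsilon>)\<close>.\<close>
  let ?a = "\<lambda>i. if i = k then (1 - 3 * \<epsilon>) / (3 * (1 - \<epsilon>)) else 1 / (3 * (1 - \<epsilon>))"
  let ?b = "\<lambda>i. if i = k then 1 else 0 :: real"
  have three: "{1..3::nat} = {1, 2, 3}" by auto
  have ne: "1 - \<epsilon> \<noteq> 0" using \<epsilon> by simp
  have "(\<Sum>i\<in>{1..3}. ?a i) = (1 - 3 * \<epsilon>) / (3 * (1 - \<epsilon>)) + 2 * (1 / (3 * (1 - \<epsilon>)))"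
    using jk unfolding three by auto
  also have "\<dots> = 1"
  proof -
    define d where "d = 3 * (1 - \<epsilon>)"
    have "d \<noteq> 0" "1 - 3 * \<epsilon> + 2 = d"
      using ne by (simp_all add: d_def)
    then show ?thesis
      unfolding d_def[symmetric] by (simp add: field_simps)
  qed
  finally show a: "?a \<in> prob_simplex 3"
    using \<epsilon> unfolding prob_simplex_def by auto
  show "?b \<in> prob_simplex 3"
    using jk unfolding prob_simplex_def three by auto
  show "(1 - \<epsilon>) * ?a i + (1 - (1 - \<epsilon>)) * ?b i = 1/3" for i
    using ne by (auto simp: field_simps)
  have "\<epsilon> \<le> \<epsilon> / (1 - \<epsilon>)"
    using \<epsilon> by (simp add: field_simps)
  also have "\<dots> = ?a j - ?a k"
    using jk ne by (simp add: field_simps)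
  finally show "adopts 3 (tilted_utility \<epsilon> j k) ?a"
    using adopts_tilted_utility_iff[OF jk a] by simp
qed (use \<epsilon> in auto)

lemma regret_AR_uniform3_ge_half:
  assumes "is_scheme 3 \<pi>"
  shows "1/2 \<le> regret_AR 3 (\<lambda>_. 1/3) \<pi>"
proof (rule field_le_epsilon)
  fix e :: real assume "0 < e"
  define \<epsilon> where "\<epsilon> = min e (1/4)"
  have \<epsilon>: "0 < \<epsilon>" "\<epsilon> \<le> 1/3" "\<epsilon> \<le> e"
    using \<open>0 < e\<close> by (auto simp: \<epsilon>_def)
  let ?u = "tilted_utility \<epsilon> 1 2" and ?v = "tilted_utility \<epsilon> 2 1"
  interpret signaling 3 "\<lambda>_. 1/3" \<pi>
    by (rule uniform3.signalingI[OF assms])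
  have "sender_util 3 (\<lambda>_. 1/3) \<pi> ?u + sender_util 3 (\<lambda>_. 1/3) \<pi> ?v \<le> 1"
    by (rule sender_util_add_le_one) (use \<epsilon> adopts_tilted_utility_iff in fastforce)
  moreover have "1 - \<epsilon> \<le> opt_util 3 (\<lambda>_. 1/3) ?u" "1 - \<epsilon> \<le> opt_util 3 (\<lambda>_. 1/3) ?v"
    using \<epsilon> by (auto intro!: opt_util_tilted_utility_ge)
  moreover have "opt_util 3 (\<lambda>_. 1/3) ?u - sender_util 3 (\<lambda>_. 1/3) \<pi> ?u \<le> regret_AR 3 (\<lambda>_. 1/3) \<pi>"
    "opt_util 3 (\<lambda>_. 1/3) ?v - sender_util 3 (\<lambda>_. 1/3) \<pi> ?v \<le> regret_AR 3 (\<lambda>_. 1/3) \<pi>"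
    by (rule uniform3.regret_AR_ge)+
  ultimately show "1/2 \<le> regret_AR 3 (\<lambda>_. 1/3) \<pi> + e"
    using \<epsilon> by linarith
qed

section \<open>The edge scheme\<close>

lemma nn_integral_FTC_Ico:
  fixes f F :: "real \<Rightarrow> real"
  assumes "f \<in> borel_measurable borel" "\<And>x. x \<in> {a..b} \<Longrightarrow> (F has_real_derivative f x) (at x)"
    and "\<And>x. x \<in> {a..b} \<Longrightarrow> 0 \<le> f x" and "a \<le> b"
  shows "(\<integral>\<^sup>+x. ennreal (f x) * indicator {a..<b} x \<partial>lborel) = ennreal (F b - F a)"
proof -
  have "(\<integral>\<^sup>+x. ennreal (f x) * indicator {a..<b} x \<partial>lborel) = (\<integral>\<^sup>+x. ennreal (f x) * indicator {a..b} x \<partial>lborel)"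
    by (intro nn_integral_cong_AE, rule AE_mp[OF AE_lborel_singleton[of b]]) (auto split: split_indicator)
  then show ?thesis
    using nn_integral_FTC_Icc[OF assms] by simp
qed

lemma nn_integral_split_unit_intervals:
  fixes f :: "real \<Rightarrow> ennreal"
  assumes [measurable]: "f \<in> borel_measurable borel"
  shows "(\<integral>\<^sup>+s. f s * indicator {0..<real m} s \<partial>lborel)
    = (\<Sum>k<m. \<integral>\<^sup>+t. f (real k + t) * indicator {0..<1} t \<partial>lborel)"
proof (induction m)
  case (Suc m)
  have "indicator {0..<real (Suc m)} s = indicator {0..<real m} s + (indicator {real m..<real m + 1} s :: ennreal)" for s
    by (auto split: split_indicator)
  then have "(\<integral>\<^sup>+s. f s * indicator {0..<real (Suc m)} s \<partial>lborel)
      = (\<integral>\<^sup>+s. f s * indicator {0..<real m} s \<partial>lborel) + (\<integral>\<^sup>+s. f s * indicator {real m..<real m + 1} s \<partial>lborel)"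
    by (simp add: distrib_left nn_integral_add)
  also have "(\<integral>\<^sup>+s. f s * indicator {real m..<real m + 1} s \<partial>lborel) = (\<integral>\<^sup>+t. f (real m + t) * indicator {0..<1} t \<partial>lborel)"
    by (subst nn_integral_real_affine[where c = 1 and t = "real m"]) (auto intro!: nn_integral_cong split: split_indicator)
  finally show ?case
    using Suc by simp
qed simp

lemma sum_two_points:
  fixes x y :: real and f :: "nat \<Rightarrow> real"
  assumes "a \<in> {1..n}" "b \<in> {1..n}" "a \<noteq> b"
  shows "(\<Sum>i\<in>{1..n}. (if i = a then x else if i = b then y else 0) * f i) = x * f a + y * f b"
proof -
  have "(if i = a then x else if i = b then y else 0) * f i = (if i = a then x * f i else 0) + (if i = b then y * f i else 0)" for i
    using assms(3) by simp
  then show ?thesis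
    using assms by (simp add: sum.distrib)
qed

definition edge_posterior :: "nat \<Rightarrow> nat \<Rightarrow> real \<Rightarrow> nat \<Rightarrow> real" where
  "edge_posterior a b t i = (if i = a then 1 / (1 + t) else if i = b then t / (1 + t) else 0)"

lemma edge_posterior_prob_simplex:
  assumes "a \<in> {1..n}" "b \<in> {1..n}" "a \<noteq> b" "0 \<le> t"
  shows "edge_posterior a b t \<in> prob_simplex n"
  using sum_two_points[OF assms(1-3), of "1 / (1 + t)" "t / (1 + t)" "\<lambda>_. 1"] assms(4)
  unfolding prob_simplex_def edge_posterior_def by (simp add: add_divide_distrib[symmetric])

lemma adopts_edge_posterior_iff:
  assumes "a \<in> {1..n}" "b \<in> {1..n}" "a \<noteq> b" "0 \<le> t"
  shows "adopts n u (edge_posterior a b t) \<longleftrightarrow> 0 \<le> u a + t * u b"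
proof -
  have "(\<Sum>i\<in>{1..n}. edge_posterior a b t i * u i) = (u a + t * u b) / (1 + t)"
    using sum_two_points[OF assms(1-3), of "1 / (1 + t)" "t / (1 + t)" u]
    unfolding edge_posterior_def by (simp add: add_divide_distrib)
  then show ?thesis
    using assms(4) unfolding adopts_def by (simp add: zero_le_divide_iff)
qed

lemma nn_integral_edge_posterior:
  assumes "a \<noteq> b"
  shows "(\<integral>\<^sup>+t. ennreal (edge_posterior a b t i) * indicator {0..<1} t \<partial>lborel)
    = ennreal (if i = a then ln 2 else if i = b then 1 - ln 2 else 0)"
proof -
  consider "i = a" | "i = b" | "i \<noteq> a" "i \<noteq> b" by blast
  then show ?thesis
  proof cases
    case 1
    have "(\<integral>\<^sup>+t. ennreal (1 / (1 + t)) * indicator {0..<1} t \<partial>lborel) = ennreal (ln (1 + 1) - ln (1 + 0))"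
      by (rule nn_integral_FTC_Ico) (auto intro!: derivative_eq_intros)
    then show ?thesis
      using 1 by (simp add: edge_posterior_def)
  next
    case 2
    have "(\<integral>\<^sup>+t. ennreal (t / (1 + t)) * indicator {0..<1} t \<partial>lborel) = ennreal ((1 - ln (1 + 1)) - (0 - ln (1 + 0)))"
      by (rule nn_integral_FTC_Ico[where F = "\<lambda>t. t - ln (1 + t)"])
        (auto intro!: derivative_eq_intros simp: field_simps)
    then show ?thesis
      using 2 assms by (simp add: edge_posterior_def)
  qed (simp add: edge_posterior_def)
qed

definition edge_pair :: "nat \<Rightarrow> nat \<times> nat" where
  "edge_pair k = [(1, 2), (2, 1), (1, 3), (3, 1), (2, 3), (3, 2)] ! k"

definition edge_path :: "nat \<Rightarrow> real \<Rightarrow> real" where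
  "edge_path i s = edge_posterior (fst (edge_pair (nat \<lfloor>s\<rfloor>))) (snd (edge_pair (nat \<lfloor>s\<rfloor>))) (frac s) i"

lemma edge_pair_distinct_states:
  "k < 6 \<Longrightarrow> fst (edge_pair k) \<in> {1..3} \<and> snd (edge_pair k) \<in> {1..3} \<and> fst (edge_pair k) \<noteq> snd (edge_pair k)"
  by (auto simp: edge_pair_def less_Suc_eq eval_nat_numeral)

lemma sum_edge_pair:
  "(\<Sum>k<6. f (edge_pair k)) = f (1, 2) + f (2, 1) + f (1, 3) + f (3, 1) + f (2, 3) + f (3, 2)"
  by (simp add: edge_pair_def eval_nat_numeral)

lemma edge_path_shift:
  assumes "0 \<le> t" "t < 1"
  shows "edge_path i (real k + t) = edge_posterior (fst (edge_pair k)) (snd (edge_pair k)) t i"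
proof -
  have "\<lfloor>real k + t\<rfloor> = int k"
    using assms by linarith
  then show ?thesis
    by (simp add: edge_path_def frac_def)
qed

lemma sum_edge_posterior_mass:
  assumes "i \<in> {1..3}"
  shows "(\<Sum>k<6. if i = fst (edge_pair k) then ln 2 else if i = snd (edge_pair k) then 1 - ln 2 else 0) = (2::real)"
proof -
  have "i = 1 \<or> i = 2 \<or> i = 3"
    using assms by auto
  then show ?thesis
    by (auto simp: edge_pair_def eval_nat_numeral)
qed

lemma measurable_edge_path [measurable]: "edge_path i \<in> borel_measurable borel"
  unfolding edge_path_def edge_posterior_def frac_def by measurable

lemma edge_path_prob_simplex:
  assumes "s \<in> {0..<6}"
  shows "(\<lambda>i. edge_path i s) \<in> prob_simplex 3"
proof -
  have "nat \<lfloor>s\<rfloor> < 6"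
    using assms by (subst nat_less_iff) (auto simp: floor_less_iff)
  then show ?thesis
    unfolding edge_path_def using edge_pair_distinct_states
    by (intro edge_posterior_prob_simplex) (auto simp: frac_ge_0)
qed

lemma nn_integral_edge_path:
  assumes i: "i \<in> {1..3}"
  shows "(\<integral>\<^sup>+s. ennreal (edge_path i s) \<partial>uniform_measure lborel {0..<6}) = ennreal (1/3)"
proof -
  have "(\<integral>\<^sup>+t. ennreal (edge_path i (real k + t)) * indicator {0..<1} t \<partial>lborel)
      = (\<integral>\<^sup>+t. ennreal (edge_posterior (fst (edge_pair k)) (snd (edge_pair k)) t i)
          * indicator {0..<1} t \<partial>lborel)" for k
    by (intro nn_integral_cong) (simp add: edge_path_shift split: split_indicator)
  then have "(\<integral>\<^sup>+s. ennreal (edge_path i s) \<partial>uniform_measure lborel {0..<6})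
      = (\<Sum>k<6. \<integral>\<^sup>+t. ennreal (edge_posterior (fst (edge_pair k)) (snd (edge_pair k)) t i)
          * indicator {0..<1} t \<partial>lborel) / 6"
    using nn_integral_split_unit_intervals[of "\<lambda>s. ennreal (edge_path i s)" 6]
    by (simp add: nn_integral_uniform_measure)
  also have "\<dots> = ennreal 2 / 6"
    using i edge_pair_distinct_states ln_2_less_1 ln_ge_zero[of 2]
    by (simp add: nn_integral_edge_posterior sum_edge_posterior_mass)
  also have "\<dots> = ennreal (1/3)"
    using divide_ennreal[of 2 6] by simp
  finally show ?thesis .
qed

interpretation edge: posterior_map 3 "\<lambda>_. 1/3" "uniform_measure lborel {0..<6}" edge_path
  using edge_path_prob_simplex nn_integral_edge_path
  by (intro posterior_map.intro uniform3.prior_axioms posterior_map_axioms.intro AE_uniform_measureI AE_I2) auto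

definition adoption_length :: "real \<Rightarrow> real \<Rightarrow> real" where
  "adoption_length x y =
     (if 0 \<le> x \<and> 0 \<le> y then 1
      else if 0 \<le> x then min 1 (x / - y)
      else if 0 < y then max 0 (1 + x / y)
      else 0)"

definition adoption_total :: "real \<Rightarrow> real \<Rightarrow> real \<Rightarrow> real" where
  "adoption_total x y z = adoption_length x y + adoption_length y x + adoption_length x z
     + adoption_length z x + adoption_length y z + adoption_length z y"

lemma adoption_length_nonneg: "0 \<le> adoption_length x y"
  unfolding adoption_length_def by (auto simp: divide_nonneg_neg)

lemma nonneg_affine_iff_pos: "0 < y \<Longrightarrow> 0 \<le> x + t * y \<longleftrightarrow> - x / y \<le> (t::real)"
  by (subst pos_divide_le_eq) auto

lemma nonneg_affine_iff_neg: "y < 0 \<Longrightarrow> 0 \<le> x + t * y \<longleftrightarrow> t \<le> x / - (y::real)"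
  by (subst pos_le_divide_eq) auto

lemma adoption_length_le_emeasure:
  "ennreal (adoption_length x y) \<le> emeasure lborel ({0..<1} \<inter> {t. 0 \<le> x + t * y})"
proof -
  let ?S = "{0..<1} \<inter> {t. 0 \<le> x + t * y}"
  have interval: "ennreal (h - l) \<le> emeasure lborel ?S" if "{l..<h} \<subseteq> ?S" "l \<le> h" for l h
  proof -
    have "?S \<in> sets borel"
      by measurable
    then show ?thesis
      using emeasure_mono[OF that(1), of lborel] that(2) by simp
  qed
  consider "0 \<le> x" "0 \<le> y" | "0 \<le> x" "y < 0" | "x < 0" "0 < y" "- x / y \<le> 1"
    | "x < 0" "y \<le> 0 \<or> 1 < - x / y"
    by linarith
  then show ?thesis
  proof cases
    case 1
    then have "{0..<1} \<subseteq> ?S"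
      by (auto intro: add_nonneg_nonneg mult_nonneg_nonneg)
    then show ?thesis
      using interval[of 0 1] 1 by (simp add: adoption_length_def)
  next
    case 2
    then have "{0..<min 1 (x / - y)} \<subseteq> ?S"
      by (auto simp: nonneg_affine_iff_neg)
    then show ?thesis
      using interval[of 0 "min 1 (x / - y)"] 2 by (simp add: adoption_length_def divide_nonneg_neg)
  next
    case 3
    moreover have "0 \<le> - x / y"
      using 3 by (simp add: divide_nonpos_pos)
    ultimately have "{- x / y..<1} \<subseteq> ?S"
      by (auto simp: nonneg_affine_iff_pos)
    then show ?thesis
      using interval[of "- x / y" 1] 3 by (simp add: adoption_length_def)
  next
    case 4
    then show ?thesis
      by (auto simp: adoption_length_def ennreal_neg)
  qed
qed

lemma emeasure_edge_adoption:
  "emeasure lborel ({0..<6} \<inter> {s. adopts 3 u (\<lambda>i. edge_path i s)})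
    = (\<Sum>k<6. emeasure lborel ({0..<1} \<inter> {t. 0 \<le> u (fst (edge_pair k)) + t * u (snd (edge_pair k))}))"
proof -
  let ?A = "{s. adopts 3 u (\<lambda>i. edge_path i s)}"
  have [measurable]: "?A \<in> sets borel"
    unfolding adopts_def by measurable
  have "(\<integral>\<^sup>+t. indicator ?A (real k + t) * indicator {0..<1} t \<partial>lborel)
      = emeasure lborel ({0..<1} \<inter> {t. 0 \<le> u (fst (edge_pair k)) + t * u (snd (edge_pair k))})"
    if "k < 6" for k
  proof -
    have "indicator ?A (real k + t) * indicator {0..<1} t
        = (indicator ({0..<1} \<inter> {t. 0 \<le> u (fst (edge_pair k)) + t * u (snd (edge_pair k))}) t :: ennreal)" for t
      using edge_pair_distinct_states[OF that]
      by (simp add: edge_path_shift adopts_edge_posterior_iff split: split_indicator)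
    then show ?thesis
      by simp
  qed
  moreover have "emeasure lborel ({0..<6} \<inter> ?A) = (\<integral>\<^sup>+s. indicator ?A s * indicator {0..<real 6} s \<partial>lborel)"
    by (simp add: indicator_inter_arith mult.commute flip: nn_integral_indicator)
  ultimately show ?thesis
    using nn_integral_split_unit_intervals[of "indicator ?A" 6] by simp
qed

definition edge_scheme :: scheme where
  "edge_scheme = posterior_scheme (\<lambda>_. 1/3) (uniform_measure lborel {0..<6}) edge_path"

lemma sender_util_edge_scheme_ge:
  "adoption_total (u 1) (u 2) (u 3) / 6 \<le> sender_util 3 (\<lambda>_. 1/3) edge_scheme u"
proof -
  let ?A = "{s. adopts 3 u (\<lambda>i. edge_path i s)}"
  let ?len = "\<lambda>p. adoption_length (u (fst p)) (u (snd p))"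
  have "ennreal (adoption_total (u 1) (u 2) (u 3)) = (\<Sum>k<6. ennreal (?len (edge_pair k)))"
    using sum_edge_pair[of ?len] adoption_length_nonneg by (simp add: adoption_total_def sum_ennreal)
  also have "\<dots> \<le> (\<Sum>k<6. emeasure lborel ({0..<1} \<inter> {t. 0 \<le> u (fst (edge_pair k)) + t * u (snd (edge_pair k))}))"
    by (intro sum_mono adoption_length_le_emeasure)
  also have "\<dots> = emeasure lborel ({0..<6} \<inter> ?A)"
    by (rule emeasure_edge_adoption[symmetric])
  also have "\<dots> = ennreal (measure lborel ({0..<6} \<inter> ?A))"
  proof (rule emeasure_eq_ennreal_measure)
    have "emeasure lborel ({0..<6} \<inter> ?A) \<le> emeasure lborel {0..<6::real}"
      by (intro emeasure_mono) auto
    then show "emeasure lborel ({0..<6} \<inter> ?A) \<noteq> \<top>"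
      by (auto simp: top_unique)
  qed
  finally have "adoption_total (u 1) (u 2) (u 3) \<le> measure lborel ({0..<6} \<inter> ?A)"
    by simp
  then show ?thesis
    by (simp add: edge_scheme_def edge.sender_util_posterior_scheme measure_uniform_Ico adopts_def)
qed

section \<open>Certificates for three states\<close>

definition certifies3 :: "real \<Rightarrow> real \<Rightarrow> real \<Rightarrow> real \<Rightarrow> real \<Rightarrow> real \<Rightarrow> bool" where
  "certifies3 x y z c1 c2 c3 \<longleftrightarrow> 0 \<le> c1 \<and> 0 \<le> c2 \<and> 0 \<le> c3 \<and>
     (\<forall>p1 p2 p3. 0 \<le> p1 \<longrightarrow> 0 \<le> p2 \<longrightarrow> 0 \<le> p3 \<longrightarrow> p1 + p2 + p3 = 1 \<longrightarrow>
        0 \<le> p1 * x + p2 * y + p3 * z \<longrightarrow> 1 \<le> p1 * c1 + p2 * c2 + p3 * c3)"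

lemma certifies3_imp_certifies:
  assumes "certifies3 (u 1) (u 2) (u 3) c1 c2 c3"
  shows "certifies 3 u (\<lambda>i. if i = 1 then c1 else if i = 2 then c2 else c3)"
proof -
  have three: "{1..3::nat} = {1, 2, 3}" by auto
  show ?thesis
    using assms unfolding certifies_def prob_simplex_def adopts_def certifies3_def three
    by (simp add: add.assoc)
qed

lemma certifies3_swap12: "certifies3 x y z c1 c2 c3 \<Longrightarrow> certifies3 y x z c2 c1 c3"
  unfolding certifies3_def by (smt (verit))

lemma certifies3_swap23: "certifies3 x y z c1 c2 c3 \<Longrightarrow> certifies3 x z y c1 c3 c2"
  unfolding certifies3_def by (smt (verit))

lemma certifies3_scale: "0 < r \<Longrightarrow> certifies3 (x / r) (y / r) (z / r) c1 c2 c3 \<Longrightarrow> certifies3 x y z c1 c2 c3"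
  unfolding certifies3_def by (auto simp: field_simps)

lemma certifies3_ones: "certifies3 x y z 1 1 1"
  unfolding certifies3_def by simp

lemma certifies3_zeros:
  assumes "x < 0" "y \<le> x" "z \<le> x"
  shows "certifies3 x y z 0 0 0"
  unfolding certifies3_def
proof (intro conjI allI impI)
  fix p1 p2 p3 :: real
  assume p: "0 \<le> p1" "0 \<le> p2" "0 \<le> p3" "p1 + p2 + p3 = 1" "0 \<le> p1 * x + p2 * y + p3 * z"
  have "p2 * y \<le> p2 * x" "p3 * z \<le> p3 * x"
    using p assms by (simp_all add: mult_left_mono)
  then have "p1 * x + p2 * y + p3 * z \<le> (p1 + p2 + p3) * x"
    by (simp add: algebra_simps)
  then show "1 \<le> p1 * 0 + p2 * 0 + p3 * 0"
    using p(4,5) assms(1) by simp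
qed simp_all

lemma certifies3_neg1: "-1 \<le> x \<Longrightarrow> -1 \<le> y \<Longrightarrow> certifies3 x y (-1) (x + 1) (y + 1) 0"
  unfolding certifies3_def by (auto simp: algebra_simps)

lemma certifies3_first:
  assumes "0 \<le> x" "0 < b" "b \<le> 1"
  shows "certifies3 x (- b) (-1) ((x + b) / b) 0 0"
  unfolding certifies3_def
proof (intro conjI allI impI)
  show "0 \<le> (x + b) / b"
    using assms by simp
  fix p1 p2 p3 :: real
  assume p: "0 \<le> p1" "0 \<le> p2" "0 \<le> p3" "p1 + p2 + p3 = 1" "0 \<le> p1 * x + p2 * - b + p3 * -1"
  have "p3 * b \<le> p3"
    using p(3) assms(3) by (simp add: mult_left_le)
  moreover have "b = b * p1 + b * p2 + b * p3"
    using p(4) by (metis distrib_left mult.right_neutral)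
  ultimately have "b \<le> p1 * (x + b)"
    using p(5) by (simp add: algebra_simps)
  then show "1 \<le> p1 * ((x + b) / b) + p2 * 0 + p3 * 0"
    using assms(2) by (simp add: field_simps)
qed simp_all

definition half_regret_certificate3 :: "real \<Rightarrow> real \<Rightarrow> real \<Rightarrow> bool" where
  "half_regret_certificate3 x y z \<longleftrightarrow>
     (\<exists>c1 c2 c3. certifies3 x y z c1 c2 c3 \<and> 2 * (c1 + c2 + c3) \<le> adoption_total x y z + 3)"

lemma adoption_total_swap12: "adoption_total y x z = adoption_total x y z"
  unfolding adoption_total_def by (simp add: ac_simps)

lemma adoption_total_swap23: "adoption_total x z y = adoption_total x y z"
  unfolding adoption_total_def by (simp add: ac_simps)

lemma adoption_length_scale: "0 < r \<Longrightarrow> adoption_length (x / r) (y / r) = adoption_length x y"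
  unfolding adoption_length_def by (simp add: zero_le_divide_iff zero_less_divide_iff)

lemma half_regret_certificate3_swap12: "half_regret_certificate3 x y z \<Longrightarrow> half_regret_certificate3 y x z"
  unfolding half_regret_certificate3_def using certifies3_swap12 adoption_total_swap12
  by (metis add.commute)

lemma half_regret_certificate3_swap23: "half_regret_certificate3 x y z \<Longrightarrow> half_regret_certificate3 x z y"
  unfolding half_regret_certificate3_def using certifies3_swap23 adoption_total_swap23
  by (metis add.assoc add.commute)

lemma half_regret_certificate3_scale:
  "0 < r \<Longrightarrow> half_regret_certificate3 (x / r) (y / r) (z / r) \<Longrightarrow> half_regret_certificate3 x y z"
  unfolding half_regret_certificate3_def adoption_total_def by (auto simp: adoption_length_scale dest: certifies3_scale)

lemma adoption_length_neg1_sum: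
  "0 \<le> t \<Longrightarrow> adoption_length t (-1) + adoption_length (-1) t = min 1 t + (if t \<le> 1 then 0 else 1 - 1 / t)"
  unfolding adoption_length_def by (auto simp: field_simps)

lemma half_regret_certificate3_nonneg_pair:
  assumes "0 \<le> y" "y \<le> x"
  shows "half_regret_certificate3 x y (-1)"
proof -
  have total: "adoption_total x y (-1)
      = 2 + (min 1 x + (if x \<le> 1 then 0 else 1 - 1 / x)) + (min 1 y + (if y \<le> 1 then 0 else 1 - 1 / y))"
    using adoption_length_neg1_sum[of x] adoption_length_neg1_sum[of y] assms
    unfolding adoption_total_def by (simp add: adoption_length_def)
  show ?thesis
  proof (cases "1 \<le> x + y")
    case True
    have "0 \<le> (if x \<le> 1 then 0 else 1 - 1 / x)" "0 \<le> (if y \<le> 1 then 0 else 1 - 1 / y)"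
      by (auto simp: field_simps)
    moreover have "1 \<le> min 1 x + min 1 y"
      using True assms by linarith
    ultimately have "2 * (1 + 1 + 1) \<le> adoption_total x y (-1) + 3"
      unfolding total by (smt (verit))
    then show ?thesis
      unfolding half_regret_certificate3_def using certifies3_ones by blast
  next
    case False
    then have "2 * ((x + 1) + (y + 1) + 0) \<le> adoption_total x y (-1) + 3"
      unfolding total using assms by simp
    then show ?thesis
      unfolding half_regret_certificate3_def using certifies3_neg1[of x y] assms by force
  qed
qed

lemma adoption_total_mixed_pair:
  assumes x: "0 \<le> x" and b: "0 < b"
  shows "adoption_total x (- b) (-1)
    = min 1 (x / b) + (if x \<le> b then 0 else 1 - b / x) + (min 1 x + (if x \<le> 1 then 0 else 1 - 1 / x))"
proof -
  have "adoption_length (- b) x = (if x \<le> b then 0 else 1 - b / x)"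
    using x b unfolding adoption_length_def by (auto simp: field_simps)
  then show ?thesis
    using adoption_length_neg1_sum[OF x] x b unfolding adoption_total_def by (simp add: adoption_length_def)
qed

lemma mixed_pair_ineq_le_one:
  fixes b x :: real
  assumes "0 < b" "b < x" "x \<le> 1"
  shows "b / x \<le> 1 - x + 2 * b"
proof -
  have "b \<le> x * (1 - x + 2 * b)"
  proof (cases "1 \<le> 2 * x")
    case True
    have "0 \<le> x * (1 - x)" "0 \<le> b * (2 * x - 1)"
      using True assms by simp_all
    moreover have "x * (1 - x + 2 * b) - b = x * (1 - x) + b * (2 * x - 1)"
      by (simp add: algebra_simps)
    ultimately show ?thesis
      by linarith
  next
    case False
    have "b * (1 - 2 * x) \<le> x * (1 - 2 * x)"
      using False assms by (intro mult_right_mono) auto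
    moreover have "x * (1 - x + 2 * b) - b = x * x + (x * (1 - 2 * x) - b * (1 - 2 * x))"
      by (simp add: algebra_simps)
    ultimately show ?thesis
      by (smt (verit) zero_le_square)
  qed
  then show ?thesis
    using assms by (simp add: divide_le_eq mult.commute)
qed

lemma mixed_pair_ineq_gt_one:
  fixes b x :: real
  assumes "0 < b" "1 < x" "x < 1 + b"
  shows "b / x + 1 / x \<le> 3 - 2 * x + 2 * b"
proof -
  have "(2 * x - 1) * (x - 1 - b) \<le> 0"
    using assms by (intro mult_nonneg_nonpos) auto
  moreover have "(2 * x - 1) * (x - 1 - b) = 1 + b - x * (3 - 2 * x + 2 * b)"
    by (simp add: algebra_simps)
  ultimately show ?thesis
    using assms by (simp add: add_divide_distrib[symmetric] divide_le_eq mult.commute)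
qed

lemma half_regret_certificate3_mixed_pair:
  assumes x: "0 \<le> x" and b: "0 < b" "b \<le> 1"
  shows "half_regret_certificate3 x (- b) (-1)"
proof -
  note total = adoption_total_mixed_pair[OF x b(1)]
  have cert_neg1: "certifies3 x (- b) (-1) (x + 1) (- b + 1) 0"
    using certifies3_neg1[of x "- b"] x b by simp
  consider "1 + b \<le> x" | "x \<le> b" | "b < x" "x \<le> 1" | "1 < x" "x < 1 + b"
    by linarith
  then show ?thesis
  proof cases
    case 1
    then have "min 1 (x / b) = 1" "min 1 x = 1" "\<not> x \<le> b" "\<not> x \<le> 1" "b / x + 1 / x \<le> 1"
      using b by (simp_all add: le_divide_eq add_divide_distrib[symmetric] divide_le_eq)
    then have "2 * (1 + 1 + 1) \<le> adoption_total x (- b) (-1) + 3"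
      unfolding total by simp
    then show ?thesis
      unfolding half_regret_certificate3_def using certifies3_ones by blast
  next
    case 2
    have "0 \<le> b * x"
      using b x by simp
    then have "min 1 (x / b) = x / b" "min 1 x = x" "x \<le> 1" "x / b \<le> x + 1" "(x + b) / b = x / b + 1"
      using 2 b by (simp_all add: divide_le_eq add_divide_distrib algebra_simps)
    then have "2 * ((x + b) / b + 0 + 0) \<le> adoption_total x (- b) (-1) + 3"
      unfolding total using 2 by simp
    then show ?thesis
      unfolding half_regret_certificate3_def using certifies3_first[OF x b] by blast
  next
    case 3
    then have "min 1 (x / b) = 1" "min 1 x = x" "\<not> x \<le> b"
      using b by (simp_all add: le_divide_eq)
    then have "2 * ((x + 1) + (- b + 1) + 0) \<le> adoption_total x (- b) (-1) + 3"
      unfolding total using 3 mixed_pair_ineq_le_one[OF b(1) 3] by simp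
    then show ?thesis
      unfolding half_regret_certificate3_def using cert_neg1 by blast
  next
    case 4
    then have "min 1 (x / b) = 1" "min 1 x = 1" "\<not> x \<le> b" "\<not> x \<le> 1"
      using b by (simp_all add: le_divide_eq)
    then have "2 * ((x + 1) + (- b + 1) + 0) \<le> adoption_total x (- b) (-1) + 3"
      unfolding total using mixed_pair_ineq_gt_one[OF b(1) 4] by simp
    then show ?thesis
      unfolding half_regret_certificate3_def using cert_neg1 by blast
  qed
qed

lemma half_regret_certificate3_sorted:
  assumes "z \<le> y" "y \<le> x"
  shows "half_regret_certificate3 x y z"
proof (cases "0 \<le> z")
  case True
  then have "adoption_total x y z = 6"
    using assms unfolding adoption_total_def adoption_length_def by simp
  then show ?thesis
    unfolding half_regret_certificate3_def using certifies3_ones by fastforce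
next
  case z: False
  show ?thesis
  proof (cases "x < 0")
    case True
    then show ?thesis
      unfolding half_regret_certificate3_def adoption_total_def
      using assms certifies3_zeros[of x y z] adoption_length_nonneg by force
  next
    case x: False
    define r where "r = - z"
    have r: "0 < r" "z / r = -1"
      using z by (simp_all add: r_def)
    have "half_regret_certificate3 (x / r) (y / r) (-1)"
    proof (cases "0 \<le> y")
      case True
      then show ?thesis
        using assms r by (intro half_regret_certificate3_nonneg_pair) (simp_all add: divide_right_mono)
    next
      case False
      have "- 1 \<le> y / r"
        using assms r by (simp add: divide_right_mono flip: r(2))
      then show ?thesis
        using half_regret_certificate3_mixed_pair[of "x / r" "- (y / r)"] x False r by (simp add: divide_neg_pos)
    qed
    then show ?thesis
      using half_regret_certificate3_scale[OF r(1)] r(2) by simp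
  qed
qed

lemma half_regret_certificate3: "half_regret_certificate3 x y z"
proof -
  have ordered: "half_regret_certificate3 x y z" if "y \<le> x" for x y z
  proof -
    consider "z \<le> y" | "y \<le> z" "z \<le> x" | "x \<le> z"
      by linarith
    then show ?thesis
    proof cases
      case 1
      then show ?thesis using that by (rule half_regret_certificate3_sorted)
    next
      case 2
      then show ?thesis using half_regret_certificate3_sorted[of y z x] half_regret_certificate3_swap23 by blast
    next
      case 3
      then show ?thesis
        using that half_regret_certificate3_sorted[of y x z] half_regret_certificate3_swap12 half_regret_certificate3_swap23 by blast
    qed
  qed
  show ?thesis
    using ordered[of y x] ordered[of x y] half_regret_certificate3_swap12 by (cases "y \<le> x") auto
qed

lemma opt_util_uniform3_le_adoption_total: "opt_util 3 (\<lambda>_. 1/3) u \<le> adoption_total (u 1) (u 2) (u 3) / 6 + 1/2"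
proof -
  obtain c1 c2 c3 where c: "certifies3 (u 1) (u 2) (u 3) c1 c2 c3"
    and cost: "2 * (c1 + c2 + c3) \<le> adoption_total (u 1) (u 2) (u 3) + 3"
    using half_regret_certificate3 unfolding half_regret_certificate3_def by blast
  have "opt_util 3 (\<lambda>_. 1/3) u \<le> (\<Sum>i\<in>{1..3::nat}. 1/3 * (if i = 1 then c1 else if i = 2 then c2 else c3))"
    by (rule uniform3.opt_util_le_certificate[OF certifies3_imp_certifies[OF c]])
  also have "\<dots> = (c1 + c2 + c3) / 3"
    by (simp add: numeral_3_eq_3)
  finally show ?thesis
    using cost by linarith
qed

lemma regret_AR_edge_scheme_le_half: "regret_AR 3 (\<lambda>_. 1/3) edge_scheme \<le> 1/2"
proof (rule uniform3.regret_AR_le)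
  fix u
  show "opt_util 3 (\<lambda>_. 1/3) u - sender_util 3 (\<lambda>_. 1/3) edge_scheme u \<le> 1/2"
    using opt_util_uniform3_le_adoption_total[of u] sender_util_edge_scheme_ge[of u] by linarith
qed

theorem proposition2:
  shows "Reg_AR 3 (\<lambda>_. 1/3) = 1/2"
proof (rule uniform3.Reg_AR_eqI)
  show "1/2 \<le> regret_AR 3 (\<lambda>_. 1/3) \<pi>" if "is_scheme 3 \<pi>" for \<pi>
    using that by (rule regret_AR_uniform3_ge_half)
  show "is_scheme 3 edge_scheme"
    unfolding edge_scheme_def by (rule edge.is_scheme_posterior_scheme)
  show "regret_AR 3 (\<lambda>_. 1/3) edge_scheme \<le> 1/2"
    by (rule regret_AR_edge_scheme_le_half)
qed

end
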